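(* Let $E$ be a Banach space, $\mathcal{E}$ the $\sigma$-algebra on $E$ generated by the (open) balls, and $F$ a linear subspace of $E^*$ such that $x\mapsto\langle x,\xi\rangle$ is $\mathcal{E}$-measurable for every $\xi\in F$. Let $\{a_n\}_{n\in\mathbf{N}}$ be a positive sequence with $a_n\to\infty$. Let $\Phi_n,\Phi:E\times F\to\mathbf{R}$ ($n\in\mathbf{N}$) be such that: 1. For all $\xi\in F$, $\Phi_n(\cdot,\xi)$ is $\mathcal{E}$-measurable. 2. For all $\xi\in F$, $\Phi(\cdot,\xi)$ is $\mathcal{E}$-measurable and continuous, and $\Phi(x,0)=0$ for all $x\in E$. 3. For all $\xi\in F$ and all compact $K\subset E$, $b_n(K,\xi):=\sup_{x\in K}|a_n^{-1}\Phi_n(x,a_n\xi)-\Phi(x,\xi)|\to0$ as $n\to\infty$. For each $n$, let $Y_n$ be an $E$-valued $\mathcal{E}$-measurable random vector defined on a probability space $(\Omega_n,\mathcal{A}_n,\mathbf{P}_n)$ (with expectation $\mathbf{E}_n$), and consider: 4. For all $n\in\mathbf{N}$ and $\xi\in F$, $\mathbf{E}_n\exp[\langle Y_n,\xi\rangle-\Phi_n(Y_n,\xi)]=1$. 5. $\{\mathcal{L}_{\mathbf{P}_n}(Y_n)\}_{n\in\mathbf{N}}$ is exponentially tight. Then if 1–4 hold, for every compact $K\subset E$, $$\limsup_n a_n^{-1}\log\mathbf{P}_n\{Y_n\in K\}\le-\inf_{x\in K}\Phi^*(x,x),$$ and if 1–5 hold, for every $A\in\mathcal{E}$, $$\limsup_n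 a_n^{-1}\log\mathbf{P}_n\{Y_n\in A\}\le-\inf_{x\in \bar A}\Phi^*(x,x).$$
   Context: For $x,y\in E$, $\Phi^*(x,y)=\sup_{\xi\in F}[\langle y,\xi\rangle-\Phi(x,\xi)]$. Exponential tightness of $\{\mathcal{L}_{\mathbf{P}_n}(Y_n)\}$ means: for every $b>0$ there is a compact $K\subset E$ with $\limsup_n a_n^{-1}\log\mathbf{P}_n\{Y_n\notin K\}\le -b$. $\bar A$ denotes the closure of $A$. *)

theory Defs
  imports "HOL-Probability.Probability"
begin

definition ball_sigma :: "'a::metric_space measure" where
  "ball_sigma = sigma UNIV {ball x r | x r. True}"

definition scaled_log :: "real \<Rightarrow> real \<Rightarrow> ereal" where
  "scaled_log a p = (if p = 0 then -\<infinity> else ereal (ln p / a))"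

definition Phi_star ::
  "('a::real_normed_vector \<Rightarrow>\<^sub>L real) set \<Rightarrow> ('a \<Rightarrow> ('a \<Rightarrow>\<^sub>L real) \<Rightarrow> real)
     \<Rightarrow> 'a \<Rightarrow> 'a \<Rightarrow> ereal" where
  "Phi_star F Phi x y = (SUP \<xi>\<in>F. ereal (blinfun_apply \<xi> y - Phi x \<xi>))"

definition exp_tight ::
  "(nat \<Rightarrow> real) \<Rightarrow> (nat \<Rightarrow> 'b measure) \<Rightarrow> (nat \<Rightarrow> 'b \<Rightarrow> 'a::topological_space) \<Rightarrow> bool" where
  "exp_tight a M Y = (\<forall>b>0. \<exists>K. compact K \<and>
     limsup (\<lambda>n. scaled_log (a n) (measure (M n) {\<omega>\<in>space (M n). Y n \<omega> \<notin> K}))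
       \<le> - ereal b)"

end

theory Submission
  imports Defs
begin

text \<open>
  For a fixed \<open>\<xi> \<in> F\<close>, the moment identity of hypothesis 4 applied to \<open>a\<^sub>n \<xi>\<close> is an
  exponential Chebyshev inequality: on a compact set where \<open>\<langle>y,\<xi>\<rangle> - \<Phi>(y,\<xi>) \<ge> c\<close>, hypothesis 3
  makes \<open>\<langle>y, a\<^sub>n\<xi>\<rangle> - \<Phi>\<^sub>n(y, a\<^sub>n\<xi>) \<ge> a\<^sub>n(c - \<epsilon>)\<close> for large \<open>n\<close>, so the probability that \<open>Y\<^sub>n\<close> lies
  there is at most \<open>exp(-a\<^sub>n(c - \<epsilon>))\<close>. Since \<open>\<Phi>(\<cdot>,\<xi>)\<close> is continuous, every point of a compact
  set \<open>K\<close> has such a neighbourhood with \<open>c\<close> close to \<open>\<Phi>\<^sup>*(x,x)\<close>; finitely many cover \<open>K\<close>, and a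
  finite union bound does not change the exponential rate. Exponential tightness reduces a
  measurable \<open>A\<close> to the compact set \<open>closure A \<inter> K\<close> up to an event of arbitrarily fast
  exponential decay.
\<close>

lemma ball_in_ball_sigma: "ball x r \<in> sets ball_sigma"
  unfolding ball_sigma_def by (subst sets_measure_of) (auto intro: sigma_sets.Basic)

lemma space_ball_sigma: "space ball_sigma = UNIV"
  by (simp add: ball_sigma_def)

lemma compact_in_ball_sigma:
  fixes K :: "'a::metric_space set"
  assumes K: "compact K"
  shows "K \<in> sets ball_sigma"
proof -
  \<comment> \<open>No separability is available, so \<open>K\<close> is written as the countable intersection of the
      \<open>1/(m+1)\<close>-neighbourhoods of finite nets \<open>T m \<subseteq> K\<close>.\<close>
  have "\<exists>T. finite T \<and> T \<subseteq> K \<and> K \<subseteq> (\<Union>x\<in>T. ball x (1 / Suc m))" for m :: nat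
  proof -
    have "K \<subseteq> (\<Union>x\<in>K. ball x (1 / Suc m))" by auto
    from compactE_image[OF K _ this] show ?thesis by (metis open_ball)
  qed
  then obtain T where T: "\<And>m. finite (T m) \<and> T m \<subseteq> K \<and> K \<subseteq> (\<Union>x\<in>T m. ball x (1 / Suc m))"
    by metis
  have "K \<subseteq> (\<Inter>m. \<Union>x\<in>T m. ball x (1 / Suc m))" using T by blast
  moreover have "(\<Inter>m. \<Union>x\<in>T m. ball x (1 / Suc m)) \<subseteq> closure K"
  proof
    fix y assume y: "y \<in> (\<Inter>m. \<Union>x\<in>T m. ball x (1 / Suc m))"
    show "y \<in> closure K"
      unfolding closure_approachable
    proof (intro allI impI)
      fix e :: real assume "e > 0"
      then obtain m :: nat where m: "1 / Suc m < e"
        by (metis nat_approx_posE)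
      from y obtain x where "x \<in> T m" "y \<in> ball x (1 / Suc m)" by blast
      then show "\<exists>x\<in>K. dist x y < e" using T m
        by (metis dist_commute mem_ball order.strict_trans subsetD)
    qed
  qed
  ultimately have "K = (\<Inter>m. \<Union>x\<in>T m. ball x (1 / Suc m))"
    using K by (simp add: compact_imp_closed closure_closed subset_antisym)
  also have "\<dots> \<in> sets ball_sigma"
    using T ball_in_ball_sigma by (intro sets.countable_INT) (auto intro!: sets.finite_UN)
  finally show ?thesis .
qed

lemma scaled_log_le_iff:
  assumes "a > 0" "p \<ge> 0"
  shows "scaled_log a p \<le> ereal (- d) \<longleftrightarrow> p \<le> exp (- (a * d))"
proof (cases "p = 0")
  case False
  then have "ln p / a \<le> - d \<longleftrightarrow> ln p \<le> - (a * d)"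
    using assms(1) by (simp add: divide_simps mult.commute)
  also have "\<dots> \<longleftrightarrow> p \<le> exp (- (a * d))"
    using False assms(2) by (metis exp_le_cancel_iff exp_ln order_le_less)
  finally show ?thesis using False by (simp add: scaled_log_def)
qed (simp add: scaled_log_def)

lemma eventually_mult_exp_le_exp:
  fixes a :: "nat \<Rightarrow> real"
  assumes "filterlim a at_top sequentially" "d' < d"
  shows "eventually (\<lambda>n. m * exp (- (a n * d)) \<le> exp (- (a n * d'))) sequentially"
proof -
  have "eventually (\<lambda>n. ln (\<bar>m\<bar> + 1) / (d - d') \<le> a n) sequentially"
    using assms(1) by (simp add: filterlim_at_top)
  then show ?thesis
  proof eventually_elim
    case (elim n)
    then have "ln (\<bar>m\<bar> + 1) \<le> a n * (d - d')" using assms(2) by (simp add: divide_simps)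
    then have "\<bar>m\<bar> + 1 \<le> exp (a n * (d - d'))"
      by (metis add_nonneg_pos abs_ge_zero exp_le_cancel_iff exp_ln zero_less_one)
    then have "m \<le> exp (a n * (d - d'))" by simp
    then have "m * exp (- (a n * d)) \<le> exp (a n * (d - d')) * exp (- (a n * d))"
      by (simp add: mult_right_mono)
    also have "\<dots> = exp (- (a n * d'))" by (simp add: exp_add[symmetric] algebra_simps)
    finally show ?case .
  qed
qed

text \<open>
  For nonnegative \<open>p\<close> this is equivalent to \<open>limsup a\<^sub>n\<^sup>-\<^sup>1 log p\<^sub>n \<le> -I\<close>
  (\<open>exp_decay_iff_limsup_scaled_log\<close>), but it is the form that survives finite sums and comparisons.
\<close>
definition exp_decay :: "(nat \<Rightarrow> real) \<Rightarrow> ereal \<Rightarrow> (nat \<Rightarrow> real) \<Rightarrow> bool" where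
  "exp_decay a I p \<longleftrightarrow> (\<forall>d. ereal d < I \<longrightarrow> eventually (\<lambda>n. p n \<le> exp (- (a n * d))) sequentially)"

lemma exp_decay_iff_limsup_scaled_log:
  assumes a_pos: "\<And>n. a n > 0" and p_nonneg: "\<And>n. p n \<ge> 0"
  shows "exp_decay a I p \<longleftrightarrow> limsup (\<lambda>n. scaled_log (a n) (p n)) \<le> - I"
    (is "_ \<longleftrightarrow> ?L \<le> - I")
proof
  assume decay: "exp_decay a I p"
  show "?L \<le> - I"
  proof (rule ccontr)
    assume "\<not> ?L \<le> - I"
    then have "- ?L < I" by (simp add: ereal_uminus_less_reorder)
    then obtain d where d: "- ?L < ereal d" "ereal d < I" using ereal_dense2 by blast
    have "eventually (\<lambda>n. p n \<le> exp (- (a n * d))) sequentially"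
      using decay d(2) unfolding exp_decay_def by blast
    then have "eventually (\<lambda>n. scaled_log (a n) (p n) \<le> ereal (- d)) sequentially"
      by eventually_elim (simp add: scaled_log_le_iff a_pos p_nonneg)
    then have "?L \<le> ereal (- d)" by (rule Limsup_bounded)
    with d(1) show False by (simp add: ereal_uminus_less_reorder)
  qed
next
  assume L: "?L \<le> - I"
  show "exp_decay a I p"
    unfolding exp_decay_def
  proof (intro allI impI)
    fix d assume "ereal d < I"
    then have "- I < ereal (- d)" by (metis ereal_minus_less_minus uminus_ereal.simps(1))
    with L have "?L < ereal (- d)" by (rule le_less_trans)
    then have "eventually (\<lambda>n. scaled_log (a n) (p n) < ereal (- d)) sequentially"
      by (rule Limsup_lessD)
    then show "eventually (\<lambda>n. p n \<le> exp (- (a n * d))) sequentially"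
      by eventually_elim (simp add: scaled_log_le_iff[OF a_pos p_nonneg, symmetric])
  qed
qed

lemma exp_decay_approx:
  assumes "\<And>d. ereal d < I \<Longrightarrow> \<exists>J > ereal d. exp_decay a J p"
  shows "exp_decay a I p"
  using assms unfolding exp_decay_def by blast

lemma exp_decay_mono:
  assumes "\<And>n. q n \<le> p n" "exp_decay a I p"
  shows "exp_decay a I q"
  using assms unfolding exp_decay_def by (metis (mono_tags, lifting) eventually_mono order.trans)

lemma exp_decay_rate_mono:
  assumes "J \<le> I" "exp_decay a I p"
  shows "exp_decay a J p"
  using assms unfolding exp_decay_def by (meson order.strict_trans2)

lemma exp_decay_sum:
  assumes a_lim: "filterlim a at_top sequentially" and D: "finite D"
    and decay: "\<And>i. i \<in> D \<Longrightarrow> exp_decay a I (p i)"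
  shows "exp_decay a I (\<lambda>n. \<Sum>i\<in>D. p i n)"
  unfolding exp_decay_def
proof (intro allI impI)
  fix d assume "ereal d < I"
  then obtain d' where d: "d < d'" "ereal d' < I"
    using ereal_dense2 by (metis less_ereal.simps(1))
  have "eventually (\<lambda>n. \<forall>i\<in>D. p i n \<le> exp (- (a n * d'))) sequentially"
    using decay d(2) D by (auto simp: exp_decay_def eventually_ball_finite)
  with eventually_mult_exp_le_exp[OF a_lim d(1), of "card D"]
  show "eventually (\<lambda>n. (\<Sum>i\<in>D. p i n) \<le> exp (- (a n * d))) sequentially"
  proof eventually_elim
    case (elim n)
    have "(\<Sum>i\<in>D. p i n) \<le> (\<Sum>i\<in>D. exp (- (a n * d')))" by (rule sum_mono) (use elim in auto)
    also have "\<dots> \<le> exp (- (a n * d))" using elim by simp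
    finally show ?case .
  qed
qed

lemma exp_decay_add:
  assumes "filterlim a at_top sequentially" "exp_decay a I p" "exp_decay a I q"
  shows "exp_decay a I (\<lambda>n. p n + q n)"
proof -
  have "exp_decay a I (\<lambda>n. \<Sum>b\<in>UNIV. (if b then p else q) n)"
    by (rule exp_decay_sum[OF assms(1)]) (use assms(2,3) in auto)
  then show ?thesis by (simp add: UNIV_bool add.commute)
qed

lemma exp_Markov_inequality:
  assumes S: "S \<in> sets M" and moment: "(\<integral>\<^sup>+ \<omega>. ennreal (exp (g \<omega>)) \<partial>M) \<le> 1"
    and on_S: "\<And>\<omega>. \<omega> \<in> S \<Longrightarrow> t \<le> g \<omega>"
  shows "measure M S \<le> exp (- t)"
proof -
  have "ennreal (exp t) * emeasure M S = (\<integral>\<^sup>+ \<omega>. ennreal (exp t) * indicator S \<omega> \<partial>M)"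
    by (rule nn_integral_cmult_indicator[symmetric, OF S])
  also have "\<dots> \<le> (\<integral>\<^sup>+ \<omega>. ennreal (exp (g \<omega>)) \<partial>M)"
    by (rule nn_integral_mono) (auto simp: indicator_def on_S ennreal_leI)
  finally have "ennreal (exp t) * emeasure M S \<le> 1" using moment by simp
  then have "ennreal (exp (- t)) * (ennreal (exp t) * emeasure M S) \<le> ennreal (exp (- t))"
    by (metis mult_left_mono mult.right_neutral zero_le)
  moreover have "ennreal (exp (- t)) * ennreal (exp t) = 1"
    by (simp flip: ennreal_mult add: exp_minus_inverse mult.commute)
  ultimately have "emeasure M S \<le> ennreal (exp (- t))"
    by (simp add: mult.assoc[symmetric])
  then show ?thesis
    unfolding measure_def by (rule enn2real_leI[rotated]) simp
qed

locale exp_moment_setting =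
  fixes F :: "('a::real_normed_vector \<Rightarrow>\<^sub>L real) set"
    and a :: "nat \<Rightarrow> real"
    and Phin :: "nat \<Rightarrow> 'a \<Rightarrow> ('a \<Rightarrow>\<^sub>L real) \<Rightarrow> real"
    and Phi :: "'a \<Rightarrow> ('a \<Rightarrow>\<^sub>L real) \<Rightarrow> real"
    and M :: "nat \<Rightarrow> 'b measure"
    and Y :: "nat \<Rightarrow> 'b \<Rightarrow> 'a"
  assumes F_subspace: "subspace F"
    and a_pos: "\<And>n. a n > 0"
    and a_lim: "filterlim a at_top sequentially"
    and Phi_cont: "\<And>\<xi>. \<xi> \<in> F \<Longrightarrow> continuous_on UNIV (\<lambda>x. Phi x \<xi>)"
    and Phin_approx: "\<And>\<xi> K. \<xi> \<in> F \<Longrightarrow> compact K \<Longrightarrow>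
       (\<lambda>n. SUP x\<in>K. ennreal \<bar>Phin n x (a n *\<^sub>R \<xi>) / a n - Phi x \<xi>\<bar>) \<longlonglongrightarrow> 0"
    and M_prob: "\<And>n. prob_space (M n)"
    and Y_meas: "\<And>n. Y n \<in> measurable (M n) ball_sigma"
    and exp_moment: "\<And>n \<xi>. \<xi> \<in> F \<Longrightarrow>
       (\<integral>\<^sup>+ \<omega>. ennreal (exp (\<xi> (Y n \<omega>) - Phin n (Y n \<omega>) \<xi>)) \<partial>M n) = 1"
begin

definition prob_in :: "nat \<Rightarrow> 'a set \<Rightarrow> real" where
  "prob_in n C = measure (M n) {\<omega> \<in> space (M n). Y n \<omega> \<in> C}"

lemma finite_measure_M: "finite_measure (M n)"
  using M_prob by (rule prob_space.axioms(1))

lemma sets_Y_preimage: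
  assumes "C \<in> sets ball_sigma"
  shows "{\<omega> \<in> space (M n). Y n \<omega> \<in> C} \<in> sets (M n)"
proof -
  have "{\<omega> \<in> space (M n). Y n \<omega> \<in> C} = Y n -` C \<inter> space (M n)" by auto
  then show ?thesis using measurable_sets[OF Y_meas assms] by simp
qed

lemma prob_in_nonneg: "prob_in n C \<ge> 0"
  by (simp add: prob_in_def)

lemma prob_in_mono:
  assumes "C \<subseteq> D" "D \<in> sets ball_sigma"
  shows "prob_in n C \<le> prob_in n D"
  unfolding prob_in_def using assms sets_Y_preimage[OF assms(2)]
  by (intro finite_measure.finite_measure_mono[OF finite_measure_M]) auto

lemma prob_in_UN_le:
  assumes "finite D" "\<And>i. i \<in> D \<Longrightarrow> C i \<in> sets ball_sigma"
  shows "prob_in n (\<Union>i\<in>D. C i) \<le> (\<Sum>i\<in>D. prob_in n (C i))"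
proof -
  have "{\<omega> \<in> space (M n). Y n \<omega> \<in> (\<Union>i\<in>D. C i)} = (\<Union>i\<in>D. {\<omega> \<in> space (M n). Y n \<omega> \<in> C i})"
    by auto
  then show ?thesis
    unfolding prob_in_def using assms sets_Y_preimage
    by (auto intro!: measure_UNION_le)
qed

lemma prob_in_Un_le:
  assumes "C \<in> sets ball_sigma" "D \<in> sets ball_sigma"
  shows "prob_in n (C \<union> D) \<le> prob_in n C + prob_in n D"
proof -
  have "{\<omega> \<in> space (M n). Y n \<omega> \<in> C \<union> D}
      = {\<omega> \<in> space (M n). Y n \<omega> \<in> C} \<union> {\<omega> \<in> space (M n). Y n \<omega> \<in> D}"
    by auto
  then show ?thesis
    unfolding prob_in_def using assms sets_Y_preimage
    by (auto intro!: measure_Un_le)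
qed

lemma exp_decay_prob_in_superlevel:
  assumes \<xi>: "\<xi> \<in> F" and C: "compact C" and c: "\<And>y. y \<in> C \<Longrightarrow> c \<le> \<xi> y - Phi y \<xi>"
  shows "exp_decay a c (\<lambda>n. prob_in n C)"
  unfolding exp_decay_def
proof (intro allI impI)
  fix d assume "ereal d < ereal c"
  then have "0 < ennreal (c - d)" by simp
  from order_tendstoD(2)[OF Phin_approx[OF \<xi> C] this]
  show "eventually (\<lambda>n. prob_in n C \<le> exp (- (a n * d))) sequentially"
  proof eventually_elim
    case (elim n)
    have on_C: "a n * d \<le> (a n *\<^sub>R \<xi>) y - Phin n y (a n *\<^sub>R \<xi>)" if y: "y \<in> C" for y
    proof -
      have "ennreal \<bar>Phin n y (a n *\<^sub>R \<xi>) / a n - Phi y \<xi>\<bar> < ennreal (c - d)"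
        using elim y by (meson SUP_upper order.strict_trans1)
      then have "\<bar>Phin n y (a n *\<^sub>R \<xi>) / a n - Phi y \<xi>\<bar> < c - d"
        by (simp add: ennreal_less_iff)
      then have "d \<le> \<xi> y - Phin n y (a n *\<^sub>R \<xi>) / a n" using c[OF y] by linarith
      then have "a n * d \<le> a n * (\<xi> y - Phin n y (a n *\<^sub>R \<xi>) / a n)"
        using a_pos[of n] by (simp add: mult_left_mono)
      then show ?thesis
        using a_pos[of n] by (simp add: right_diff_distrib scaleR_blinfun.rep_eq)
    qed
    show ?case
      unfolding prob_in_def
    proof (intro exp_Markov_inequality
        [where g = "\<lambda>\<omega>. (a n *\<^sub>R \<xi>) (Y n \<omega>) - Phin n (Y n \<omega>) (a n *\<^sub>R \<xi>)"])
      show "{\<omega> \<in> space (M n). Y n \<omega> \<in> C} \<in> sets (M n)"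
        by (intro sets_Y_preimage compact_in_ball_sigma C)
      show "(\<integral>\<^sup>+ \<omega>. ennreal (exp ((a n *\<^sub>R \<xi>) (Y n \<omega>) - Phin n (Y n \<omega>) (a n *\<^sub>R \<xi>))) \<partial>M n) \<le> 1"
        using exp_moment[OF subspace_scale[OF F_subspace \<xi>]] by simp
    qed (use on_C in auto)
  qed
qed

lemma compact_finite_superlevel_cover:
  assumes K: "compact K" and c: "\<And>x. x \<in> K \<Longrightarrow> ereal c < Phi_star F Phi x x"
  obtains D where "D \<subseteq> F" "finite D" "K \<subseteq> (\<Union>\<xi>\<in>D. {y. c \<le> blinfun_apply \<xi> y - Phi y \<xi>})"
proof -
  define U where "U \<xi> = {y. c < \<xi> y - Phi y \<xi>}" for \<xi> :: "'a \<Rightarrow>\<^sub>L real"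
  have "open (U \<xi>)" if "\<xi> \<in> F" for \<xi>
    unfolding U_def by (rule open_Collect_less) (auto intro!: continuous_intros Phi_cont that)
  moreover have "K \<subseteq> (\<Union>\<xi>\<in>F. U \<xi>)"
  proof
    fix x assume "x \<in> K"
    then obtain \<xi> where "\<xi> \<in> F" "ereal c < ereal (\<xi> x - Phi x \<xi>)"
      using c unfolding Phi_star_def by (auto simp: less_SUP_iff)
    then show "x \<in> (\<Union>\<xi>\<in>F. U \<xi>)" unfolding U_def by auto
  qed
  ultimately obtain D where D: "D \<subseteq> F" "finite D" "K \<subseteq> (\<Union>\<xi>\<in>D. U \<xi>)"
    by (rule compactE_image[OF K])
  have "U \<xi> \<subseteq> {y. c \<le> \<xi> y - Phi y \<xi>}" for \<xi> :: "'a \<Rightarrow>\<^sub>L real"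
    unfolding U_def by auto
  with D(3) have "K \<subseteq> (\<Union>\<xi>\<in>D. {y. c \<le> blinfun_apply \<xi> y - Phi y \<xi>})" by blast
  with D(1,2) show ?thesis by (rule that)
qed

lemma exp_decay_prob_in_compact:
  assumes K: "compact K"
  shows "exp_decay a (INF x\<in>K. Phi_star F Phi x x) (\<lambda>n. prob_in n K)"
proof (rule exp_decay_approx)
  fix d assume "ereal d < (INF x\<in>K. Phi_star F Phi x x)"
  then obtain c where dc: "ereal d < ereal c" and c: "ereal c < (INF x\<in>K. Phi_star F Phi x x)"
    using ereal_dense2 by blast
  then have "\<And>x. x \<in> K \<Longrightarrow> ereal c < Phi_star F Phi x x"
    by (meson INF_lower order.strict_trans2)
  then obtain D where D: "D \<subseteq> F" "finite D"
    and cover: "K \<subseteq> (\<Union>\<xi>\<in>D. {y. c \<le> blinfun_apply \<xi> y - Phi y \<xi>})"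
    using compact_finite_superlevel_cover[OF K] by blast
  define C where "C \<xi> = K \<inter> {y. c \<le> \<xi> y - Phi y \<xi>}" for \<xi> :: "'a \<Rightarrow>\<^sub>L real"
  have C_compact: "compact (C \<xi>)" if "\<xi> \<in> D" for \<xi>
    unfolding C_def using D that
    by (intro compact_Int_closed[OF K] closed_Collect_le) (auto intro!: continuous_intros Phi_cont)
  have "exp_decay a c (\<lambda>n. prob_in n (C \<xi>))" if "\<xi> \<in> D" for \<xi>
    using that D(1) by (intro exp_decay_prob_in_superlevel C_compact) (auto simp: C_def)
  then have "exp_decay a c (\<lambda>n. \<Sum>\<xi>\<in>D. prob_in n (C \<xi>))"
    by (rule exp_decay_sum[OF a_lim D(2)])
  moreover have "prob_in n K \<le> (\<Sum>\<xi>\<in>D. prob_in n (C \<xi>))" for n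
  proof -
    have C_sets: "C \<xi> \<in> sets ball_sigma" if "\<xi> \<in> D" for \<xi>
      using C_compact[OF that] by (rule compact_in_ball_sigma)
    have "K \<subseteq> (\<Union>\<xi>\<in>D. C \<xi>)" using cover unfolding C_def by blast
    then have "prob_in n K \<le> prob_in n (\<Union>\<xi>\<in>D. C \<xi>)"
      using D(2) C_sets by (intro prob_in_mono sets.finite_UN)
    also have "\<dots> \<le> (\<Sum>\<xi>\<in>D. prob_in n (C \<xi>))"
      using D(2) C_sets by (rule prob_in_UN_le)
    finally show ?thesis .
  qed
  ultimately have "exp_decay a c (\<lambda>n. prob_in n K)"
    by (rule exp_decay_mono[rotated])
  with dc show "\<exists>J > ereal d. exp_decay a J (\<lambda>n. prob_in n K)" by blast
qed

lemma exp_decay_prob_in_closure: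
  assumes tight: "exp_tight a M Y" and A: "A \<in> sets ball_sigma"
  shows "exp_decay a (INF x\<in>closure A. Phi_star F Phi x x) (\<lambda>n. prob_in n A)"
    (is "exp_decay a ?I _")
proof (rule exp_decay_approx)
  fix d assume d: "ereal d < ?I"
  define b where "b = \<bar>d\<bar> + 1"
  obtain K where K: "compact K" and
    "limsup (\<lambda>n. scaled_log (a n) (measure (M n) {\<omega>\<in>space (M n). Y n \<omega> \<notin> K})) \<le> - ereal b"
    using tight unfolding exp_tight_def b_def by (meson add_nonneg_pos abs_ge_zero zero_less_one)
  then have tail: "exp_decay a b (\<lambda>n. prob_in n (- K))"
    by (simp add: exp_decay_iff_limsup_scaled_log a_pos prob_in_nonneg prob_in_def)
  have "compact (closure A \<inter> K)" using K by (simp add: closed_Int_compact)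
  then have "exp_decay a (INF x\<in>closure A \<inter> K. Phi_star F Phi x x) (\<lambda>n. prob_in n (closure A \<inter> K))"
    by (rule exp_decay_prob_in_compact)
  moreover have "?I \<le> (INF x\<in>closure A \<inter> K. Phi_star F Phi x x)"
    by (rule INF_superset_mono) auto
  ultimately have core: "exp_decay a ?I (\<lambda>n. prob_in n (closure A \<inter> K))"
    by (rule exp_decay_rate_mono[rotated])
  have "exp_decay a (min ?I b) (\<lambda>n. prob_in n (closure A \<inter> K) + prob_in n (- K))"
    using a_lim exp_decay_rate_mono[OF min.cobounded1 core] exp_decay_rate_mono[OF min.cobounded2 tail]
    by (rule exp_decay_add)
  moreover have "prob_in n A \<le> prob_in n (closure A \<inter> K) + prob_in n (- K)" for n
  proof -
    have sets: "closure A \<inter> K \<in> sets ball_sigma" "- K \<in> sets ball_sigma"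
      using K sets.compl_sets[OF compact_in_ball_sigma[OF K]]
      by (auto intro: compact_in_ball_sigma closed_Int_compact simp: space_ball_sigma Compl_eq_Diff_UNIV)
    have "A \<subseteq> (closure A \<inter> K) \<union> - K" using closure_subset by blast
    then have "prob_in n A \<le> prob_in n ((closure A \<inter> K) \<union> - K)"
      using sets by (intro prob_in_mono) auto
    also have "\<dots> \<le> prob_in n (closure A \<inter> K) + prob_in n (- K)"
      using sets by (rule prob_in_Un_le)
    finally show ?thesis .
  qed
  ultimately have "exp_decay a (min ?I b) (\<lambda>n. prob_in n A)"
    by (rule exp_decay_mono[rotated])
  moreover have "ereal d < min ?I b" using d by (simp add: b_def)
  ultimately show "\<exists>J > ereal d. exp_decay a J (\<lambda>n. prob_in n A)" by blast
qed

lemma limsup_prob_in_compact_le: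
  assumes "compact K"
  shows "limsup (\<lambda>n. scaled_log (a n) (prob_in n K)) \<le> - (INF x\<in>K. Phi_star F Phi x x)"
  using exp_decay_prob_in_compact[OF assms]
  by (simp add: exp_decay_iff_limsup_scaled_log a_pos prob_in_nonneg)

lemma limsup_prob_in_closure_le:
  assumes "exp_tight a M Y" "A \<in> sets ball_sigma"
  shows "limsup (\<lambda>n. scaled_log (a n) (prob_in n A)) \<le> - (INF x\<in>closure A. Phi_star F Phi x x)"
  using exp_decay_prob_in_closure[OF assms]
  by (simp add: exp_decay_iff_limsup_scaled_log a_pos prob_in_nonneg)

end

theorem theorem2p1:
  fixes F :: "('a::banach \<Rightarrow>\<^sub>L real) set"
    and a :: "nat \<Rightarrow> real"
    and Phin :: "nat \<Rightarrow> 'a \<Rightarrow> ('a \<Rightarrow>\<^sub>L real) \<Rightarrow> real"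
    and Phi :: "'a \<Rightarrow> ('a \<Rightarrow>\<^sub>L real) \<Rightarrow> real"
    and M :: "nat \<Rightarrow> 'b measure"
    and Y :: "nat \<Rightarrow> 'b \<Rightarrow> 'a"
  assumes F_subspace: "subspace F"
    and F_meas: "\<And>\<xi>. \<xi> \<in> F \<Longrightarrow> (\<lambda>x. blinfun_apply \<xi> x) \<in> borel_measurable ball_sigma"
    and a_pos: "\<And>n. a n > 0"
    and a_lim: "filterlim a at_top sequentially"
    and H1: "\<And>n \<xi>. \<xi> \<in> F \<Longrightarrow> (\<lambda>x. Phin n x \<xi>) \<in> borel_measurable ball_sigma"
    and H2_meas: "\<And>\<xi>. \<xi> \<in> F \<Longrightarrow> (\<lambda>x. Phi x \<xi>) \<in> borel_measurable ball_sigma"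
    and H2_cont: "\<And>\<xi>. \<xi> \<in> F \<Longrightarrow> continuous_on UNIV (\<lambda>x. Phi x \<xi>)"
    and H2_zero: "\<And>x. Phi x 0 = 0"
    and H3: "\<And>\<xi> K. \<xi> \<in> F \<Longrightarrow> compact K \<Longrightarrow>
       (\<lambda>n. SUP x\<in>K. ennreal \<bar>Phin n x (a n *\<^sub>R \<xi>) / a n - Phi x \<xi>\<bar>) \<longlonglongrightarrow> 0"
    and P: "\<And>n. prob_space (M n)"
    and Y_meas: "\<And>n. Y n \<in> measurable (M n) ball_sigma"
    and H4: "\<And>n \<xi>. \<xi> \<in> F \<Longrightarrow>
       (\<integral>\<^sup>+ \<omega>. ennreal (exp (blinfun_apply \<xi> (Y n \<omega>) - Phin n (Y n \<omega>) \<xi>)) \<partial>M n) = 1"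
  shows "(\<forall>K. compact K \<longrightarrow>
            limsup (\<lambda>n. scaled_log (a n) (measure (M n) {\<omega>\<in>space (M n). Y n \<omega> \<in> K}))
              \<le> - (INF x\<in>K. Phi_star F Phi x x))
       \<and> (exp_tight a M Y \<longrightarrow>
           (\<forall>A\<in>sets ball_sigma.
            limsup (\<lambda>n. scaled_log (a n) (measure (M n) {\<omega>\<in>space (M n). Y n \<omega> \<in> A}))
              \<le> - (INF x\<in>closure A. Phi_star F Phi x x)))"
proof -
  interpret exp_moment_setting F a Phin Phi M Y
    by (rule exp_moment_setting.intro[OF F_subspace a_pos a_lim H2_cont H3 P Y_meas H4])
  show ?thesis
    using limsup_prob_in_compact_le limsup_prob_in_closure_le unfolding prob_in_def by blast
qed

end
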